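(* Let $\ell\geq 4$, let $a_1,\dots,a_\ell\in\mathbb{R}\setminus\{0\}$, and let $B\subseteq\mathbb{R}$ with $|B|=4$. Then \[ \left|\left\{ I\subseteq[\ell] : \sum_{i\in I}a_i\in B\right\}\right| \leq \frac{15}{16}2^{\ell}.\] *)

theory Defs
  imports Complex_Main
begin

end

theory Submission
  imports Defs
begin

text \<open>Nonzero weights on a k-element set S realise at least k + 1 distinct subset sums (add
  a new element to a subset of extremal sum), so when B has at most k elements not all 2^k
  subsets of S have their sum in B. Splitting on whether a fixed x lies in I bounds the count for
  S and B by the counts for S - {x} with targets B and B - a x, both again of size at most k;
  hence the proportion (2^k - 1) / 2^k persists from k elements to every larger S.\<close>

lemma finite_set_not_closed_under_translation:
  fixes V :: "real set"
  assumes "finite V" "V \<noteq> {}" "c \<noteq> 0"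
  obtains v where "v \<in> V" "v + c \<notin> V"
proof (cases "c > 0")
  case True
  then show ?thesis
    using that[of "Max V"] assms Max_ge[OF \<open>finite V\<close>, of "Max V + c"] by force
next
  case False
  with \<open>c \<noteq> 0\<close> have "c < 0" by simp
  then show ?thesis
    using that[of "Min V"] assms Min_le[OF \<open>finite V\<close>, of "Min V + c"] by force
qed

lemma card_less_card_subset_sums:
  fixes a :: "'a \<Rightarrow> real"
  assumes "finite S" "\<And>i. i \<in> S \<Longrightarrow> a i \<noteq> 0"
  shows "card S < card (sum a ` Pow S)"
  using assms
proof (induction S rule: finite_induct)
  case empty
  then show ?case by simp
next
  case (insert x S)
  define V where "V = sum a ` Pow S"
  have "finite V" "V \<noteq> {}"
    using insert.hyps by (auto simp: V_def)
  moreover have "a x \<noteq> 0"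
    using insert.prems by simp
  ultimately obtain v where "v \<in> V" "v + a x \<notin> V"
    by (rule finite_set_not_closed_under_translation)
  then obtain I where I: "I \<subseteq> S" "v = sum a I" and new: "sum a I + a x \<notin> V"
    unfolding V_def by blast
  have "finite I" "x \<notin> I"
    using I insert.hyps finite_subset by auto
  then have "sum a (insert x I) = sum a I + a x"
    by simp
  then have "sum a I + a x \<in> sum a ` Pow (insert x S)"
    using I by (metis Pow_iff image_eqI insert_mono)
  then have "insert (sum a I + a x) V \<subseteq> sum a ` Pow (insert x S)"
    by (auto simp: V_def)
  then have "card (insert (sum a I + a x) V) \<le> card (sum a ` Pow (insert x S))"
    using insert.hyps by (intro card_mono) auto
  moreover have "card S < card V"
    using insert by (simp add: V_def)
  ultimately show ?case
    using insert.hyps new \<open>finite V\<close> by simp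
qed

lemma card_subsets_with_sum_in_insert_le:
  fixes a :: "'a \<Rightarrow> real"
  assumes "finite S" "x \<notin> S"
  shows "card {I. I \<subseteq> insert x S \<and> sum a I \<in> B}
    \<le> card {I. I \<subseteq> S \<and> sum a I \<in> B} + card {I. I \<subseteq> S \<and> sum a I \<in> (\<lambda>b. b - a x) ` B}"
    (is "card ?F \<le> card ?F\<^sub>0 + card ?F\<^sub>1")
proof -
  have "?F \<subseteq> ?F\<^sub>0 \<union> insert x ` ?F\<^sub>1"
  proof
    fix I
    assume I: "I \<in> ?F"
    show "I \<in> ?F\<^sub>0 \<union> insert x ` ?F\<^sub>1"
    proof (cases "x \<in> I")
      case False
      with I show ?thesis by auto
    next
      case True
      have "finite (I - {x})"
        using I assms(1) finite_subset by auto
      then have "sum a I = a x + sum a (I - {x})"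
        using True by (simp add: sum.remove)
      then have "I - {x} \<in> ?F\<^sub>1"
        using I by (auto intro!: image_eqI[where x = "sum a I"])
      then show ?thesis
        using True by (auto intro!: image_eqI[where x = "I - {x}"])
    qed
  qed
  moreover have "finite ?F\<^sub>0" "finite ?F\<^sub>1"
    using assms(1) by (auto intro: finite_subset[of _ "Pow S"])
  ultimately have "card ?F \<le> card (?F\<^sub>0 \<union> insert x ` ?F\<^sub>1)"
    by (intro card_mono) auto
  also have "\<dots> \<le> card ?F\<^sub>0 + card ?F\<^sub>1"
    using card_Un_le card_image_le[OF \<open>finite ?F\<^sub>1\<close>, of "insert x"] by (meson add_left_mono order_trans)
  finally show ?thesis .
qed

lemma card_subsets_with_sum_in_small_set_less:
  fixes a :: "'a \<Rightarrow> real"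
  assumes "finite S" "\<And>i. i \<in> S \<Longrightarrow> a i \<noteq> 0" "finite B" "card B \<le> card S"
  shows "card {I. I \<subseteq> S \<and> sum a I \<in> B} < 2 ^ card S"
proof -
  have "\<not> sum a ` Pow S \<subseteq> B"
  proof
    assume "sum a ` Pow S \<subseteq> B"
    then have "card (sum a ` Pow S) \<le> card B"
      by (rule card_mono[OF \<open>finite B\<close>])
    moreover have "card S < card (sum a ` Pow S)"
      using assms(1,2) by (rule card_less_card_subset_sums)
    ultimately show False
      using assms(4) by linarith
  qed
  then have "{I. I \<subseteq> S \<and> sum a I \<in> B} \<subset> Pow S"
    by auto
  then show ?thesis
    using assms(1) psubset_card_mono[of "Pow S"] by (simp add: card_Pow)
qed

theorem card_subsets_with_sum_in_set_bound:
  fixes a :: "'a \<Rightarrow> real"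
  assumes "finite S" "\<And>i. i \<in> S \<Longrightarrow> a i \<noteq> 0" "finite B" "card B \<le> k" "k \<le> card S"
  shows "card {I. I \<subseteq> S \<and> sum a I \<in> B} * 2 ^ k \<le> (2 ^ k - 1) * 2 ^ card S"
  using assms(5,1-4)
proof (induction "card S" arbitrary: S B rule: nat_induct_at_least)
  case base
  then have "card {I. I \<subseteq> S \<and> sum a I \<in> B} \<le> 2 ^ k - 1"
    using card_subsets_with_sum_in_small_set_less[of S a B] by simp
  then show ?case
    using base.hyps by simp
next
  case (Suc n)
  then obtain x where "x \<in> S"
    by fastforce
  define S' where "S' = S - {x}"
  have S: "S = insert x S'" "x \<notin> S'" "finite S'" "card S' = n"
    using Suc.prems(1) Suc.hyps(3) \<open>x \<in> S\<close> by (auto simp: S'_def)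
  have IH: "card {I. I \<subseteq> S' \<and> sum a I \<in> B'} * 2 ^ k \<le> (2 ^ k - 1) * 2 ^ n"
    if "finite B'" "card B' \<le> k" for B'
    using Suc.hyps(2)[of S' B'] Suc.prems(2) S that by auto
  have translate: "finite ((\<lambda>b. b - a x) ` B)" "card ((\<lambda>b. b - a x) ` B) \<le> k"
    using Suc.prems card_image_le[OF \<open>finite B\<close>, of "\<lambda>b. b - a x"] by auto
  have "card {I. I \<subseteq> S \<and> sum a I \<in> B} * 2 ^ k
      \<le> (card {I. I \<subseteq> S' \<and> sum a I \<in> B}
         + card {I. I \<subseteq> S' \<and> sum a I \<in> (\<lambda>b. b - a x) ` B}) * 2 ^ k"
    unfolding S(1) by (intro mult_right_mono card_subsets_with_sum_in_insert_le S(2,3)) simp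
  also have "\<dots> \<le> (2 ^ k - 1) * 2 ^ n + (2 ^ k - 1) * 2 ^ n"
    unfolding add_mult_distrib using IH Suc.prems(3,4) translate by (intro add_mono) auto
  also have "\<dots> = (2 ^ k - 1) * 2 ^ card S"
    unfolding Suc.hyps(3)[symmetric] by simp
  finally show ?case .
qed

theorem lemma4p1:
  fixes l :: nat and a :: "nat \<Rightarrow> real" and B :: "real set"
  assumes "l \<ge> 4"
    and "\<And>i. i \<in> {1..l} \<Longrightarrow> a i \<noteq> 0"
    and "finite B" and "card B = 4"
  shows "real (card {I. I \<subseteq> {1..l} \<and> (\<Sum>i\<in>I. a i) \<in> B}) \<le> 15 / 16 * 2 ^ l"
proof -
  have "card {I. I \<subseteq> {1..l} \<and> sum a I \<in> B} * 2 ^ 4 \<le> (2 ^ 4 - 1) * 2 ^ card {1..l}"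
    by (rule card_subsets_with_sum_in_set_bound) (use assms in auto)
  then have "real (card {I. I \<subseteq> {1..l} \<and> sum a I \<in> B} * 16) \<le> real (15 * 2 ^ l)"
    unfolding of_nat_le_iff by simp
  then show ?thesis
    by simp
qed

end
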